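(* Let $\mathcal M,\mathcal M'$ be spin models. An emulation $\mathcal M\to\mathcal M'$ induces a polynomial-time (many-one) reduction $r$ from $\textsc{Gse}_{\mathcal M'}$ to $\textsc{Gse}_{\mathcal M}$.
   Context: A spin system $S=(q_S,V_S,E_S,J_S)$: integer $q_S\ge2$, finite $V_S$, hyperedges $E_S\subseteq\mathcal P(V_S)$ covering $V_S$, $J_S(e):[q_S]^e\to\mathbb R_{\ge0}$. $\mathcal C_S=[q_S]^{V_S}$, $H_S(\vec s)=\sum_eJ_S(e)(\vec s|_e)$, $|S|=\sum_eq_S^{|e|}$. A spin model is a set of spin systems of common spin type closed under isomorphism (relabeling of spins preserving hyperedges and interactions). Simulation $\mathcal f:S\to T$: data $\Delta>0,\Gamma\in\mathbb R,d\in\mathbb N$, $P:V_T\to V_S^k$, $\mathrm{dec}:[q_S]^k\to[q_T]$, $\mathrm{enc}=(\mathrm{enc}_i)_{i\le m}$, $\mathrm{enc}_i:[q_T]\to[q_S]^k$, with: (1) $P^{(i)}(v)=P^{(j)}(w)\Rightarrow i=j,v=w$; (2) $\mathrm{dec}\circ\mathrm{enc}_i=\mathrm{id}$; (3) $\mathrm{enc}_i(t)=\mathrm{enc}_j(t)\Rightarrow i=j$; (4) with $\mathrm{sim}_i(\vec t)=\{\vec s:\vec s\circ P=\mathrm{enc}_i\circ\vec t,\ H_S(\vec s)-\Gamma<\Delta\}$ (componentwise), $|\mathrm{sim}_i(\vec t)|=d$ whenever $H_T(\vec t)<\Delta$; (5) $H_S(\vec s)-\Gamma=H_T(\vec t)$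 for $\vec s\in\bigcup_i\mathrm{sim}_i(\vec t)$, and $H_S(\vec s)-\Gamma\ge\Delta$ for $\vec s$ in no $\mathrm{sim}_i(\vec t)$. An emulation $\mathcal M\to\mathcal M'$ is an algorithm (real-RAM model: real arithmetic, exp, log unit cost) which on input $(T,\delta)$, $T\in\mathcal M'$, $\delta\ge0$, outputs in time polynomial in $|T|$ a spin system $S\in\mathcal M$ and a simulation $S\to T$ with cut-off $\delta$; for fixed $T$ the hypergraph of $S$ is independent of $\delta$ and the simulations differ only in the shift; decoding and encodings depend only on $q_T$. $\textsc{Gse}_{\mathcal M}$ is the decision problem with yes-instances $\{(S,k): S\in\mathcal M,\ k\in\mathbb R,\ \min H_S<k\}$. Polynomial time is understood in the real-RAM model. *)

theory Defs
  imports Complex_Main "HOL-Library.List_Lexorder"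
begin

text \<open>Spins are [q] = {0..<q}; vertices are natural
numbers (every spin model is closed under isomorphism, so this is no loss).\<close>

record spin_sys =
  sq :: nat
  sV :: "nat set"
  sE :: "nat set set"
  sJ :: "nat set \<Rightarrow> (nat \<Rightarrow> nat) \<Rightarrow> real"

definition cfgs :: "nat \<Rightarrow> nat set \<Rightarrow> (nat \<Rightarrow> nat) set" where
  "cfgs q A = {s. (\<forall>v\<in>A. s v < q) \<and> (\<forall>v. v \<notin> A \<longrightarrow> s v = 0)}"

definition restr :: "(nat \<Rightarrow> nat) \<Rightarrow> nat set \<Rightarrow> nat \<Rightarrow> nat" where
  "restr s A = (\<lambda>v. if v \<in> A then s v else 0)"

definition wf_spin :: "spin_sys \<Rightarrow> bool" where
  "wf_spin S \<longleftrightarrow> sq S \<ge> 2 \<and> finite (sV S) \<and> sE S \<subseteq> Pow (sV S) \<and> \<Union>(sE S) = sV S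
     \<and> (\<forall>e\<in>sE S. \<forall>c\<in>cfgs (sq S) e. sJ S e c \<ge> 0)"

definition conf :: "spin_sys \<Rightarrow> (nat \<Rightarrow> nat) set" where
  "conf S = cfgs (sq S) (sV S)"

definition Ham :: "spin_sys \<Rightarrow> (nat \<Rightarrow> nat) \<Rightarrow> real" where
  "Ham S s = (\<Sum>e\<in>sE S. sJ S e (restr s e))"

definition ssize :: "spin_sys \<Rightarrow> nat" where
  "ssize S = (\<Sum>e\<in>sE S. sq S ^ card e)"

definition spin_iso :: "spin_sys \<Rightarrow> spin_sys \<Rightarrow> bool" where
  "spin_iso S S' \<longleftrightarrow> sq S = sq S' \<and> (\<exists>\<pi>. bij_betw \<pi> (sV S) (sV S')
      \<and> sE S' = (\<lambda>e. \<pi> ` e) ` sE S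
      \<and> (\<forall>e\<in>sE S. \<forall>c\<in>cfgs (sq S) e.
            sJ S' (\<pi> ` e) (\<lambda>w. if w \<in> \<pi> ` e then c (the_inv_into (sV S) \<pi> w) else 0) = sJ S e c))"

definition spin_model :: "spin_sys set \<Rightarrow> bool" where
  "spin_model M \<longleftrightarrow> (\<forall>S\<in>M. wf_spin S)
     \<and> (\<forall>S S'. S \<in> M \<longrightarrow> wf_spin S' \<longrightarrow> spin_iso S S' \<longrightarrow> S' \<in> M)"

definition gse :: "spin_sys \<Rightarrow> real \<Rightarrow> bool" where
  "gse S k \<longleftrightarrow> Min (Ham S ` conf S) < k"

record sim_data =
  sDelta :: real
  sGamma :: real
  sd :: nat
  sk :: nat
  sP :: "nat \<Rightarrow> nat list"
  sdec :: "nat list \<Rightarrow> nat"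
  senc :: "(nat \<Rightarrow> nat list) list"

definition tuples :: "nat \<Rightarrow> nat \<Rightarrow> nat list set" where
  "tuples q k = {xs. length xs = k \<and> (\<forall>x\<in>set xs. x < q)}"

definition simset :: "spin_sys \<Rightarrow> spin_sys \<Rightarrow> sim_data \<Rightarrow> nat \<Rightarrow> (nat \<Rightarrow> nat) \<Rightarrow> (nat \<Rightarrow> nat) set" where
  "simset S T f i t = {s \<in> conf S. (\<forall>v\<in>sV T. \<forall>j<sk f. s (sP f v ! j) = (senc f ! i) (t v) ! j)
                                  \<and> Ham S s - sGamma f < sDelta f}"

definition is_simulation :: "spin_sys \<Rightarrow> spin_sys \<Rightarrow> sim_data \<Rightarrow> bool" where
  "is_simulation S T f \<longleftrightarrow>
     sDelta f > 0 \<and> sd f \<ge> 1 \<and> senc f \<noteq> []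
     \<and> (\<forall>v\<in>sV T. length (sP f v) = sk f \<and> set (sP f v) \<subseteq> sV S)
     \<and> (\<forall>xs\<in>tuples (sq S) (sk f). sdec f xs < sq T)
     \<and> (\<forall>i<length (senc f). \<forall>t<sq T. (senc f ! i) t \<in> tuples (sq S) (sk f))
     \<comment> \<open>(1)\<close>
     \<and> (\<forall>v\<in>sV T. \<forall>w\<in>sV T. \<forall>i<sk f. \<forall>j<sk f. sP f v ! i = sP f w ! j \<longrightarrow> i = j \<and> v = w)
     \<comment> \<open>(2)\<close>
     \<and> (\<forall>i<length (senc f). \<forall>t<sq T. sdec f ((senc f ! i) t) = t)
     \<comment> \<open>(3)\<close>
     \<and> (\<forall>i<length (senc f). \<forall>j<length (senc f). \<forall>t<sq T. (senc f ! i) t = (senc f ! j) t \<longrightarrow> i = j)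
     \<comment> \<open>(4)\<close>
     \<and> (\<forall>i<length (senc f). \<forall>t\<in>conf T. Ham T t < sDelta f \<longrightarrow> card (simset S T f i t) = sd f)
     \<comment> \<open>(5)\<close>
     \<and> (\<forall>i<length (senc f). \<forall>t\<in>conf T. \<forall>s\<in>simset S T f i t. Ham S s - sGamma f = Ham T t)
     \<and> (\<forall>s\<in>conf S. (\<forall>i<length (senc f). \<forall>t\<in>conf T. s \<notin> simset S T f i t)
           \<longrightarrow> Ham S s - sGamma f \<ge> sDelta f)"

text \<open>Data are trees (S-expressions) whose leaves are reals; programs are
first-order combinators with unit-cost real arithmetic, exp and log, branching
and while loops. ev p x y n : program p on input x halts with output y after n steps.\<close>

datatype val = VNum real | VNil | VPair val val

datatype prim = PAdd | PSub | PMul | PDiv | PLess | PEq | PExp | PLn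

datatype prog = PId | PInt int | PNilC | PFst | PSnd | PIsPair | PPrim prim
  | PComp prog prog | PFork prog prog | PCond prog prog prog | PWhile prog prog

fun prim_app :: "prim \<Rightarrow> val \<Rightarrow> val option" where
  "prim_app PAdd (VPair (VNum a) (VNum b)) = Some (VNum (a + b))"
| "prim_app PSub (VPair (VNum a) (VNum b)) = Some (VNum (a - b))"
| "prim_app PMul (VPair (VNum a) (VNum b)) = Some (VNum (a * b))"
| "prim_app PDiv (VPair (VNum a) (VNum b)) = (if b = 0 then None else Some (VNum (a / b)))"
| "prim_app PLess (VPair (VNum a) (VNum b)) = Some (VNum (if a < b then 1 else 0))"
| "prim_app PEq (VPair (VNum a) (VNum b)) = Some (VNum (if a = b then 1 else 0))"
| "prim_app PExp (VNum a) = Some (VNum (exp a))"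
| "prim_app PLn (VNum a) = (if a > 0 then Some (VNum (ln a)) else None)"
| "prim_app _ _ = None"

inductive ev :: "prog \<Rightarrow> val \<Rightarrow> val \<Rightarrow> nat \<Rightarrow> bool" where
  ev_id: "ev PId v v 1"
| ev_int: "ev (PInt i) v (VNum (of_int i)) 1"
| ev_nil: "ev PNilC v VNil 1"
| ev_fst: "ev PFst (VPair a b) a 1"
| ev_snd: "ev PSnd (VPair a b) b 1"
| ev_ispair: "ev PIsPair v (VNum (case v of VPair _ _ \<Rightarrow> 1 | _ \<Rightarrow> 0)) 1"
| ev_prim: "prim_app op v = Some w \<Longrightarrow> ev (PPrim op) v w 1"
| ev_comp: "ev q v w n \<Longrightarrow> ev p w u m \<Longrightarrow> ev (PComp p q) v u (n + m + 1)"
| ev_fork: "ev p v a n \<Longrightarrow> ev q v b m \<Longrightarrow> ev (PFork p q) v (VPair a b) (n + m + 1)"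
| ev_cond_t: "ev b v (VNum x) n \<Longrightarrow> x \<noteq> 0 \<Longrightarrow> ev p v w m \<Longrightarrow> ev (PCond b p q) v w (n + m + 1)"
| ev_cond_f: "ev b v (VNum 0) n \<Longrightarrow> ev q v w m \<Longrightarrow> ev (PCond b p q) v w (n + m + 1)"
| ev_while_f: "ev b v (VNum 0) n \<Longrightarrow> ev (PWhile b p) v v (n + 1)"
| ev_while_t: "ev b v (VNum x) n \<Longrightarrow> x \<noteq> 0 \<Longrightarrow> ev p v w m \<Longrightarrow> ev (PWhile b p) w u l
     \<Longrightarrow> ev (PWhile b p) v u (n + m + l + 1)"

definition enc_list :: "val list \<Rightarrow> val" where
  "enc_list xs = foldr VPair xs VNil"

definition enc_nat :: "nat \<Rightarrow> val" where
  "enc_nat n = VNum (real n)"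

definition enc_nats :: "nat list \<Rightarrow> val" where
  "enc_nats xs = enc_list (map enc_nat xs)"

definition cfg_of :: "nat list \<Rightarrow> nat list \<Rightarrow> nat \<Rightarrow> nat" where
  "cfg_of es xs = (\<lambda>v. case map_of (zip es xs) v of Some x \<Rightarrow> x | None \<Rightarrow> 0)"

text \<open>Hyperedge e (as sorted vertex list) with its interaction table J(e) listed over [q]^e.\<close>
definition enc_edge :: "spin_sys \<Rightarrow> nat list \<Rightarrow> val" where
  "enc_edge S es = VPair (enc_nats es)
      (enc_list (map (\<lambda>xs. VNum (sJ S (set es) (cfg_of es xs))) (List.n_lists (length es) [0..<sq S])))"

definition enc_sys :: "spin_sys \<Rightarrow> val" where
  "enc_sys S = enc_list [enc_nat (sq S), enc_nats (sorted_list_of_set (sV S)),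
      enc_list (map (enc_edge S) (sorted_list_of_set (sorted_list_of_set ` sE S)))]"

definition enc_sim :: "spin_sys \<Rightarrow> spin_sys \<Rightarrow> sim_data \<Rightarrow> val" where
  "enc_sim S T f = enc_list [VNum (sDelta f), VNum (sGamma f), enc_nat (sd f), enc_nat (sk f),
      enc_list (map (\<lambda>v. enc_nats (sP f v)) (sorted_list_of_set (sV T))),
      enc_list (map (\<lambda>xs. enc_nat (sdec f xs)) (List.n_lists (sk f) [0..<sq S])),
      enc_list (map (\<lambda>g. enc_list (map (\<lambda>t. enc_nats (g t)) [0..<sq T])) (senc f))]"

definition enc_inst :: "spin_sys \<Rightarrow> real \<Rightarrow> val" where
  "enc_inst S k = VPair (enc_sys S) (VNum k)"

definition same_sim_maps :: "nat \<Rightarrow> nat \<Rightarrow> sim_data \<Rightarrow> sim_data \<Rightarrow> bool" where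
  "same_sim_maps qS qT f g \<longleftrightarrow> sk f = sk g \<and> length (senc f) = length (senc g)
     \<and> (\<forall>xs\<in>tuples qS (sk f). sdec f xs = sdec g xs)
     \<and> (\<forall>i<length (senc f). \<forall>t<qT. (senc f ! i) t = (senc g ! i) t)"

definition emulation :: "spin_sys set \<Rightarrow> spin_sys set \<Rightarrow> prog \<Rightarrow> bool" where
  "emulation M M' A \<longleftrightarrow>
     (\<exists>a b::nat. \<forall>T\<in>M'. \<forall>\<delta>::real. \<delta> \<ge> 0 \<longrightarrow>
        (\<exists>S f n. ev A (VPair (enc_sys T) (VNum \<delta>)) (VPair (enc_sys S) (enc_sim S T f)) n
           \<and> n \<le> a * (ssize T + 1) ^ b
           \<and> S \<in> M \<and> is_simulation S T f \<and> sDelta f \<ge> \<delta>))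
   \<and> (\<forall>T\<in>M'. \<forall>\<delta>1 \<delta>2 S1 S2 f1 f2 n1 n2. \<delta>1 \<ge> 0 \<longrightarrow> \<delta>2 \<ge> 0 \<longrightarrow>
        ev A (VPair (enc_sys T) (VNum \<delta>1)) (VPair (enc_sys S1) (enc_sim S1 T f1)) n1 \<longrightarrow>
        ev A (VPair (enc_sys T) (VNum \<delta>2)) (VPair (enc_sys S2) (enc_sim S2 T f2)) n2 \<longrightarrow>
        sq S1 = sq S2 \<and> sV S1 = sV S2 \<and> sE S1 = sE S2
        \<and> sd f1 = sd f2 \<and> (\<forall>v\<in>sV T. sP f1 v = sP f2 v) \<and> same_sim_maps (sq S1) (sq T) f1 f2)
   \<and> (\<forall>T1\<in>M'. \<forall>T2\<in>M'. \<forall>\<delta>1 \<delta>2 S1 S2 f1 f2 n1 n2. sq T1 = sq T2 \<longrightarrow> \<delta>1 \<ge> 0 \<longrightarrow> \<delta>2 \<ge> 0 \<longrightarrow>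
        ev A (VPair (enc_sys T1) (VNum \<delta>1)) (VPair (enc_sys S1) (enc_sim S1 T1 f1)) n1 \<longrightarrow>
        ev A (VPair (enc_sys T2) (VNum \<delta>2)) (VPair (enc_sys S2) (enc_sim S2 T2 f2)) n2 \<longrightarrow>
        sq S1 = sq S2 \<and> same_sim_maps (sq S1) (sq T1) f1 f2)"

definition poly_reduction :: "spin_sys set \<Rightarrow> spin_sys set \<Rightarrow> prog \<Rightarrow> bool" where
  "poly_reduction M' M R \<longleftrightarrow>
     (\<exists>a b::nat. \<forall>T\<in>M'. \<forall>k::real. \<exists>S k' n.
        ev R (enc_inst T k) (enc_inst S k') n \<and> n \<le> a * (ssize T + 1) ^ b
        \<and> S \<in> M \<and> (gse T k \<longleftrightarrow> gse S k'))"

end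

theory Submission
  imports Defs
begin

text \<open>Given an instance (T, k), run the emulation on T with a cut-off \<delta> \<ge> max k 0 and output
  (S, k + \<Gamma>). Every energy of T below the cut-off is realised, shifted by \<Gamma>, by some configuration
  of S, and every energy of S below \<Gamma> + \<Delta> arises this way from T; all other energies of S are at
  least \<Gamma> + \<Delta> \<ge> \<Gamma> + k. Hence min H_T < k iff min H_S < k + \<Gamma>. The cut-off k * k + 1 is computed
  by straight-line real arithmetic, so the reduction costs one call of the emulation plus a
  constant number of steps.\<close>

lemma le_mult_self_add_one: "(x::real) \<le> x * x + 1"
proof -
  have "0 \<le> (x - 1) * (x - 1)" "0 \<le> x * x"
    by simp_all
  then have "2 * x \<le> x * x + 1" "0 \<le> x * x"
    by (simp_all add: algebra_simps)
  then show ?thesis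
    by linarith
qed

lemma poly_bound_add_const:
  fixes n a b c x :: nat
  assumes "n \<le> a * (x + 1) ^ b"
  shows "n + c \<le> (a + c) * (x + 1) ^ b"
proof -
  have "c \<le> c * (x + 1) ^ b"
    by simp
  with assms have "n + c \<le> a * (x + 1) ^ b + c * (x + 1) ^ b"
    by (rule add_mono)
  also have "\<dots> = (a + c) * (x + 1) ^ b"
    by (rule distrib_right[symmetric])
  finally show ?thesis .
qed

lemma conf_finite:
  assumes "wf_spin S"
  shows "finite (conf S)"
proof -
  have "conf S = {s. \<forall>x. (x \<in> sV S \<longrightarrow> s x \<in> {..<sq S}) \<and> (x \<notin> sV S \<longrightarrow> s x = 0)}"
    by (auto simp: conf_def cfgs_def)
  then show ?thesis
    using assms finite_set_of_finite_funs[of "sV S" "{..<sq S}" 0] by (simp add: wf_spin_def)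
qed

lemma conf_nonempty:
  assumes "wf_spin S"
  shows "conf S \<noteq> {}"
proof -
  have "(\<lambda>_. 0) \<in> conf S"
    using assms by (auto simp: wf_spin_def conf_def cfgs_def)
  then show ?thesis by blast
qed

lemma gse_iff_ex_conf:
  assumes "wf_spin S"
  shows "gse S k \<longleftrightarrow> (\<exists>s\<in>conf S. Ham S s < k)"
  using conf_finite[OF assms] conf_nonempty[OF assms] by (simp add: gse_def Min_less_iff)

lemma is_simulationD:
  assumes "is_simulation S T f"
  shows "senc f \<noteq> []" "sd f \<ge> 1"
    and "\<And>i t. i < length (senc f) \<Longrightarrow> t \<in> conf T \<Longrightarrow> Ham T t < sDelta f
           \<Longrightarrow> card (simset S T f i t) = sd f"
    and "\<And>i t s. i < length (senc f) \<Longrightarrow> t \<in> conf T \<Longrightarrow> s \<in> simset S T f i t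
           \<Longrightarrow> Ham S s - sGamma f = Ham T t"
    and "\<And>s. s \<in> conf S \<Longrightarrow> \<forall>i<length (senc f). \<forall>t\<in>conf T. s \<notin> simset S T f i t
           \<Longrightarrow> sDelta f \<le> Ham S s - sGamma f"
  using assms unfolding is_simulation_def by simp_all

lemma simulation_lifts_low_energy:
  assumes sim: "is_simulation S T f" and t: "t \<in> conf T" "Ham T t < sDelta f"
  obtains s where "s \<in> conf S" "Ham S s - sGamma f = Ham T t"
proof -
  have "0 < length (senc f)"
    using is_simulationD(1)[OF sim] by simp
  moreover have "card (simset S T f 0 t) \<noteq> 0"
    using is_simulationD(2,3)[OF sim] calculation t by simp
  ultimately obtain s where s: "s \<in> simset S T f 0 t"
    by fastforce
  show ?thesis
  proof
    show "s \<in> conf S"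
      using s by (simp add: simset_def)
    show "Ham S s - sGamma f = Ham T t"
      using is_simulationD(4)[OF sim \<open>0 < length (senc f)\<close> t(1) s] .
  qed
qed

lemma simulation_decodes_low_energy:
  assumes sim: "is_simulation S T f" and s: "s \<in> conf S" "Ham S s - sGamma f < sDelta f"
  obtains t where "t \<in> conf T" "Ham S s - sGamma f = Ham T t"
proof -
  have "\<not> (\<forall>i<length (senc f). \<forall>t\<in>conf T. s \<notin> simset S T f i t)"
    using is_simulationD(5)[OF sim s(1)] s(2) by (meson leD)
  then obtain i t where "i < length (senc f)" "t \<in> conf T" "s \<in> simset S T f i t"
    by blast
  then show ?thesis
    using is_simulationD(4)[OF sim] that by blast
qed

lemma gse_simulation_iff:
  assumes wS: "wf_spin S" and wT: "wf_spin T" and sim: "is_simulation S T f"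
    and cutoff: "k \<le> sDelta f"
  shows "gse T k \<longleftrightarrow> gse S (k + sGamma f)"
proof
  assume "gse T k"
  then obtain t where t: "t \<in> conf T" "Ham T t < k"
    using gse_iff_ex_conf[OF wT] by blast
  have "Ham T t < sDelta f"
    using t(2) cutoff by linarith
  then obtain s where "s \<in> conf S" "Ham S s - sGamma f = Ham T t"
    by (rule simulation_lifts_low_energy[OF sim t(1)])
  moreover from this t(2) have "Ham S s < k + sGamma f"
    by linarith
  ultimately show "gse S (k + sGamma f)"
    using gse_iff_ex_conf[OF wS] by blast
next
  assume "gse S (k + sGamma f)"
  then obtain s where s: "s \<in> conf S" "Ham S s < k + sGamma f"
    using gse_iff_ex_conf[OF wS] by blast
  have "Ham S s - sGamma f < sDelta f"
    using s(2) cutoff by linarith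
  then obtain t where "t \<in> conf T" "Ham S s - sGamma f = Ham T t"
    by (rule simulation_decodes_low_energy[OF sim s(1)])
  moreover from this s(2) have "Ham T t < k"
    by linarith
  ultimately show "gse T k"
    using gse_iff_ex_conf[OF wT] by blast
qed

lemma ev_add: "ev (PPrim PAdd) (VPair (VNum x) (VNum y)) (VNum (x + y)) 1"
  by (rule ev_prim) simp

lemma ev_mul: "ev (PPrim PMul) (VPair (VNum x) (VNum y)) (VNum (x * y)) 1"
  by (rule ev_prim) simp

lemma ev_one: "ev (PInt 1) v (VNum 1) 1"
  using ev_int[of 1 v] by simp

definition cutoff_prog :: prog where
  "cutoff_prog = PFork PFst
     (PComp (PPrim PAdd) (PFork (PComp (PPrim PMul) (PFork PSnd PSnd)) (PInt 1)))"

definition output_prog :: prog where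
  "output_prog = PFork (PComp PFst PFst)
     (PComp (PPrim PAdd) (PFork PSnd (PComp PFst (PComp PSnd (PComp PSnd PFst)))))"

definition gse_reduction_prog :: "prog \<Rightarrow> prog" where
  "gse_reduction_prog A = PComp output_prog (PFork (PComp A cutoff_prog) PSnd)"

lemma ev_cutoff_prog: "ev cutoff_prog (VPair x (VNum k)) (VPair x (VNum (k * k + 1))) 11"
  unfolding cutoff_prog_def
  using ev_fork[OF ev_fst ev_comp[OF ev_fork[OF ev_comp[OF ev_fork[OF ev_snd ev_snd] ev_mul]
        ev_one] ev_add]]
  by (simp add: numeral_eq_Suc)

lemma ev_output_prog:
  "ev output_prog (VPair (VPair eS (VPair (VNum D) (VPair (VNum G) rest))) (VNum k))
     (VPair eS (VNum (k + G))) 15"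
  unfolding output_prog_def
  using ev_fork[OF ev_comp[OF ev_fst ev_fst] ev_comp[OF ev_fork[OF ev_snd
        ev_comp[OF ev_comp[OF ev_comp[OF ev_fst ev_snd] ev_snd] ev_fst]] ev_add]]
  by (simp add: numeral_eq_Suc)

lemma ev_gse_reduction_prog:
  assumes "ev A (VPair eT (VNum (k * k + 1))) (VPair eS (VPair (VNum D) (VPair (VNum G) rest))) n"
  shows "ev (gse_reduction_prog A) (VPair eT (VNum k)) (VPair eS (VNum (k + G))) (n + 30)"
  unfolding gse_reduction_prog_def
  using ev_comp[OF ev_fork[OF ev_comp[OF ev_cutoff_prog assms] ev_snd] ev_output_prog]
  by (simp add: numeral_eq_Suc)

lemma ev_gse_reduction_prog_enc:
  assumes "ev A (VPair (enc_sys T) (VNum (k * k + 1))) (VPair (enc_sys S) (enc_sim S T f)) n"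
  shows "ev (gse_reduction_prog A) (enc_inst T k) (enc_inst S (k + sGamma f)) (n + 30)"
proof -
  obtain rest where "enc_sim S T f = VPair (VNum (sDelta f)) (VPair (VNum (sGamma f)) rest)"
    by (simp add: enc_sim_def enc_list_def)
  then show ?thesis
    using ev_gse_reduction_prog assms unfolding enc_inst_def by simp
qed

lemma emulation_runs:
  assumes "emulation M M' A"
  obtains a b :: nat where "\<And>T \<delta>. T \<in> M' \<Longrightarrow> 0 \<le> \<delta> \<Longrightarrow>
    \<exists>S f n. ev A (VPair (enc_sys T) (VNum \<delta>)) (VPair (enc_sys S) (enc_sim S T f)) n
      \<and> n \<le> a * (ssize T + 1) ^ b \<and> S \<in> M \<and> is_simulation S T f \<and> \<delta> \<le> sDelta f"
  using assms unfolding emulation_def by (elim conjE exE) blast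

theorem mainTheorem4:
  fixes M M' :: "spin_sys set" and A :: prog
  assumes "spin_model M" and "spin_model M'"
    and "emulation M M' A"
  shows "\<exists>R. poly_reduction M' M R"
proof -
  obtain a b :: nat where emu: "\<And>T \<delta>. T \<in> M' \<Longrightarrow> 0 \<le> \<delta> \<Longrightarrow>
    \<exists>S f n. ev A (VPair (enc_sys T) (VNum \<delta>)) (VPair (enc_sys S) (enc_sim S T f)) n
      \<and> n \<le> a * (ssize T + 1) ^ b \<and> S \<in> M \<and> is_simulation S T f \<and> \<delta> \<le> sDelta f"
    using emulation_runs[OF assms(3)] by blast
  have "\<exists>S k' n. ev (gse_reduction_prog A) (enc_inst T k) (enc_inst S k') n
      \<and> n \<le> (a + 30) * (ssize T + 1) ^ b \<and> S \<in> M \<and> (gse T k \<longleftrightarrow> gse S k')"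
    if T: "T \<in> M'" for T k
  proof -
    obtain S f n where run: "ev A (VPair (enc_sys T) (VNum (k * k + 1))) (VPair (enc_sys S) (enc_sim S T f)) n"
      and n: "n \<le> a * (ssize T + 1) ^ b" and S: "S \<in> M"
      and sim: "is_simulation S T f" and cutoff: "k * k + 1 \<le> sDelta f"
      using emu[OF T, of "k * k + 1"] by (auto simp: add_nonneg_nonneg)
    have "wf_spin S" "wf_spin T"
      using assms(1,2) S T unfolding spin_model_def by blast+
    moreover have "k \<le> sDelta f"
      using le_mult_self_add_one[of k] cutoff by linarith
    ultimately have "gse T k \<longleftrightarrow> gse S (k + sGamma f)"
      using gse_simulation_iff sim by blast
    then show ?thesis
      using ev_gse_reduction_prog_enc[OF run] poly_bound_add_const[OF n] S by blast
  qed
  then have "poly_reduction M' M (gse_reduction_prog A)"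
    unfolding poly_reduction_def by blast
  then show ?thesis ..
qed

end
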